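(* Over all 3-periodics of $\mathcal{E}$, the centroid $X_2^\dagger$ of the focus-inversive triangle moves on the circle with center and radius \[C_2^\dagger=\left(-c\left(1+\rho^2\frac{2a^2-b^2-\delta}{3a^2b^2}\right),0\right),\qquad R_2^\dagger=\rho^2\,\frac{2a^2-b^2-\delta}{3ab^2}.\]
   Context: Let $a>b>0$ and let $\mathcal{E}$ be the ellipse $x^2/a^2+y^2/b^2=1$. Set $c=\sqrt{a^2-b^2}$, $\delta=\sqrt{a^4-a^2b^2+b^4}$, and let the foci be $f_1=(-c,0)$, $f_2=(c,0)$. A 3-periodic is a triangle $P_1P_2P_3$ with vertices on $\mathcal{E}$ such that at each vertex the normal to $\mathcal{E}$ bisects the angle formed by the two sides meeting at that vertex; these form a one-parameter family (one through every point of $\mathcal{E}$). Fix $\rho>0$; the focus-inversive triangle has vertices $P_i^\dagger=f_1+(\rho/d_{1,i})^2(P_i-f_1)$, $d_{1,i}=|P_i-f_1|$. *)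

theory Defs
  imports "HOL-Analysis.Analysis"
begin

definition on_ellipse :: "real \<Rightarrow> real \<Rightarrow> real \<times> real \<Rightarrow> bool" where
  "on_ellipse a b P \<longleftrightarrow> (fst P)^2 / a^2 + (snd P)^2 / b^2 = 1"

definition ellipse_normal :: "real \<Rightarrow> real \<Rightarrow> real \<times> real \<Rightarrow> real \<times> real" where
  "ellipse_normal a b P = (fst P / a^2, snd P / b^2)"

text \<open>At vertex P with neighbours A and B, the normal to the ellipse bisects the angle APB:
  the internal bisector direction (sum of unit vectors along PA and PB) is parallel to the normal.\<close>
definition normal_bisects :: "real \<Rightarrow> real \<Rightarrow> real \<times> real \<Rightarrow> real \<times> real \<Rightarrow> real \<times> real \<Rightarrow> bool" where
  "normal_bisects a b A P B \<longleftrightarrow>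
     (let s = (1 / norm (A - P)) *\<^sub>R (A - P) + (1 / norm (B - P)) *\<^sub>R (B - P);
          n = ellipse_normal a b P
      in fst s * snd n - snd s * fst n = 0)"

definition three_periodic :: "real \<Rightarrow> real \<Rightarrow> real \<times> real \<Rightarrow> real \<times> real \<Rightarrow> real \<times> real \<Rightarrow> bool" where
  "three_periodic a b P1 P2 P3 \<longleftrightarrow>
     on_ellipse a b P1 \<and> on_ellipse a b P2 \<and> on_ellipse a b P3 \<and>
     P1 \<noteq> P2 \<and> P2 \<noteq> P3 \<and> P1 \<noteq> P3 \<and>
     normal_bisects a b P3 P1 P2 \<and> normal_bisects a b P1 P2 P3 \<and> normal_bisects a b P2 P3 P1"

definition invert :: "real \<times> real \<Rightarrow> real \<Rightarrow> real \<times> real \<Rightarrow> real \<times> real" where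
  "invert f \<rho> P = f + (\<rho> / norm (P - f))^2 *\<^sub>R (P - f)"

end

theory Submission
  imports Defs
begin

(* Work in polar coordinates about the focus f = (-c, 0): a point of the ellipse is f + r u with
   |u| = 1 and r (a - c Re u) = b^2, so the inversion in f sends it to f + rho^2 (a - c Re u) u / b^2.

   Joachimsthal's integral <v, n(P)> (v the unit direction of a side, n the normal at its endpoint P)
   has the same square on all three sides of a 3-periodic. On the ellipse this becomes a relation
   u . u' = K0 + K1 Re (u + u') between the focal directions of the two endpoints of each side, with K0
   and K1 depending only on that common value. For three distinct unit vectors these relations force
   2 K0 + 1 + K1^2 = 0 and u1 + u2 + u3 = K1; the first equation is a quadratic for the Joachimsthal
   value and yields c K1 = (2 a^2 - b^2 - delta) / a. Treating the u_i as complex numbers, so that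
   (Re u) u = (u^2 + 1) / 2 and cnj u = 1 / u, the centroid of the inverted triangle becomes a fixed
   point plus c K1 rho^2 / (3 b^2) times the unit number u1 u2 u3. *)

section \<open>Points on the unit circle\<close>

lemma orthogonal_to_same_imp_parallel:
  fixes u v w :: complex
  assumes "u \<noteq> 0" "inner v u = 0" "inner w u = 0"
  shows "Im (cnj v * w) = 0"
proof -
  have "Re u * (Re v * Im w - Im v * Re w) = 0" "Im u * (Re v * Im w - Im v * Re w) = 0"
    using assms(2,3) unfolding inner_complex_def by algebra+
  then show ?thesis using assms(1) by (auto simp: complex_eq_iff)
qed

lemma unit_circle_chord_midpoint:
  fixes v z w :: complex
  assumes "cmod z = 1" "cmod w = 1" "z \<noteq> w" "inner v z = m" "inner v w = m"
  shows "(cmod v)\<^sup>2 *\<^sub>R (z + w) = (2 * m) *\<^sub>R v"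
proof -
  have "inner (z + w) (z - w) = (cmod z)\<^sup>2 - (cmod w)\<^sup>2"
    unfolding inner_complex_def cmod_power2 by (simp add: algebra_simps power2_eq_square)
  then have "Im (cnj v * (z + w)) = 0"
    using assms by (intro orthogonal_to_same_imp_parallel[of "z - w"]) (auto simp: inner_diff_right)
  moreover have "Re (cnj v * (z + w)) = 2 * m"
    using assms(4,5) unfolding inner_complex_def by (simp add: distrib_left)
  ultimately have "cnj v * (z + w) = of_real (2 * m)"
    by (simp add: complex_eq_iff)
  then have "v * cnj v * (z + w) = v * of_real (2 * m)"
    by (simp add: mult.assoc)
  then show ?thesis
    by (simp add: complex_norm_square[symmetric] scaleR_conv_of_real mult.commute)
qed

lemma unit_circle_no_three_collinear:
  fixes p q :: complex and t1 t2 t3 :: real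
  assumes "cmod (p + t1 *\<^sub>R q) = 1" "cmod (p + t2 *\<^sub>R q) = 1" "cmod (p + t3 *\<^sub>R q) = 1"
    and "t1 \<noteq> t2" "t1 \<noteq> t3" "t2 \<noteq> t3"
  shows "q = 0"
proof -
  have quadratic: "(cmod q)\<^sup>2 * t\<^sup>2 + 2 * inner p q * t + (cmod p)\<^sup>2 - 1 = 0"
    if "cmod (p + t *\<^sub>R q) = 1" for t
  proof -
    have "(cmod (p + t *\<^sub>R q))\<^sup>2 = (cmod q)\<^sup>2 * t\<^sup>2 + 2 * inner p q * t + (cmod p)\<^sup>2"
      unfolding cmod_power2 inner_complex_def by (simp add: algebra_simps power2_eq_square)
    then show ?thesis using that by simp
  qed
  have "(t1 - t2) * ((cmod q)\<^sup>2 * (t1 + t2) + 2 * inner p q) = 0"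
    using quadratic[OF assms(1)] quadratic[OF assms(2)] by algebra
  then have "(cmod q)\<^sup>2 * (t1 + t2) + 2 * inner p q = 0" using assms(4) by simp
  moreover have "(t1 - t3) * ((cmod q)\<^sup>2 * (t1 + t3) + 2 * inner p q) = 0"
    using quadratic[OF assms(1)] quadratic[OF assms(3)] by algebra
  then have "(cmod q)\<^sup>2 * (t1 + t3) + 2 * inner p q = 0" using assms(5) by simp
  ultimately have "(cmod q)\<^sup>2 * (t2 - t3) = 0" by algebra
  then show ?thesis using assms(6) by simp
qed

lemma unit_triple_vertex:
  fixes zi zj zk :: complex and K0 K1 :: real
  assumes "cmod zi = 1" "cmod zj = 1" "cmod zk = 1" "zj \<noteq> zk"
    and "inner zi zj = K0 + K1 * Re (zi + zj)" "inner zi zk = K0 + K1 * Re (zi + zk)"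
  shows "(cmod (zi - of_real K1))\<^sup>2 *\<^sub>R (zi + zj + zk - of_real K1)
    = (2 * K0 + 1 + K1\<^sup>2) *\<^sub>R (zi - of_real K1)"
proof -
  let ?v = "zi - of_real K1" and ?m = "K0 + K1 * Re zi"
  have "inner ?v zj = ?m" "inner ?v zk = ?m"
    using assms(5,6) by (simp_all add: inner_diff_left inner_complex_def algebra_simps)
  then have midpoint: "(cmod ?v)\<^sup>2 *\<^sub>R (zj + zk) = (2 * ?m) *\<^sub>R ?v"
    using assms(2-4) by (intro unit_circle_chord_midpoint) auto
  have "(Re zi)\<^sup>2 + (Im zi)\<^sup>2 = 1"
    using assms(1) by (simp flip: cmod_power2)
  then have "(cmod ?v)\<^sup>2 + 2 * ?m = 2 * K0 + 1 + K1\<^sup>2"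
    unfolding cmod_power2 by (simp add: power2_eq_square algebra_simps)
  moreover have "(cmod ?v)\<^sup>2 *\<^sub>R (zi + zj + zk - of_real K1)
      = (cmod ?v)\<^sup>2 *\<^sub>R ?v + (cmod ?v)\<^sup>2 *\<^sub>R (zj + zk)"
    by (simp add: algebra_simps)
  ultimately show ?thesis
    unfolding midpoint by (simp flip: scaleR_add_left)
qed

lemma unit_triple_chord_relation:
  fixes z1 z2 z3 :: complex and K0 K1 :: real
  assumes unit: "cmod z1 = 1" "cmod z2 = 1" "cmod z3 = 1"
    and distinct: "z1 \<noteq> z2" "z1 \<noteq> z3" "z2 \<noteq> z3"
    and "inner z1 z2 = K0 + K1 * Re (z1 + z2)" "inner z1 z3 = K0 + K1 * Re (z1 + z3)"
      "inner z2 z3 = K0 + K1 * Re (z2 + z3)"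
  shows "2 * K0 + 1 + K1\<^sup>2 = 0" and "z1 + z2 + z3 = of_real K1"
proof -
  define Z where "Z = 2 * K0 + 1 + K1\<^sup>2"
  define W where "W = z1 + z2 + z3 - of_real K1"
  have "inner z2 z1 = K0 + K1 * Re (z2 + z1)" "inner z3 z1 = K0 + K1 * Re (z3 + z1)"
      "inner z3 z2 = K0 + K1 * Re (z3 + z2)"
    using assms(7-9) by (simp_all add: inner_commute add.commute)
  then have "(cmod (z1 - of_real K1))\<^sup>2 *\<^sub>R W = Z *\<^sub>R (z1 - of_real K1)"
    "(cmod (z2 - of_real K1))\<^sup>2 *\<^sub>R W = Z *\<^sub>R (z2 - of_real K1)"
    "(cmod (z3 - of_real K1))\<^sup>2 *\<^sub>R W = Z *\<^sub>R (z3 - of_real K1)"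
    using unit_triple_vertex[of z1 z2 z3 K0 K1] unit_triple_vertex[of z2 z1 z3 K0 K1]
      unit_triple_vertex[of z3 z1 z2 K0 K1] unit distinct assms(7-9)
    unfolding W_def Z_def by (simp_all add: ac_simps)
  then have vertex: "(cmod (z - of_real K1))\<^sup>2 *\<^sub>R W = Z *\<^sub>R (z - of_real K1)"
    if "z \<in> {z1, z2, z3}" for z
    using that by blast
  \<comment> \<open>If Z were nonzero, these identities would put z1, z2, z3 on one line through K1.\<close>
  show "Z = 0"
  proof (rule ccontr)
    assume "Z \<noteq> 0"
    define t where "t z = (cmod (z - of_real K1))\<^sup>2 / Z" for z
    have on_line: "z = of_real K1 + t z *\<^sub>R W" if "z \<in> {z1, z2, z3}" for z
    proof -
      have "t z *\<^sub>R W = (1 / Z) *\<^sub>R (Z *\<^sub>R (z - of_real K1))"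
        unfolding t_def vertex[OF that, symmetric] by (simp add: divide_inverse mult.commute)
      then show ?thesis using \<open>Z \<noteq> 0\<close> by simp
    qed
    have "t z1 \<noteq> t z2" "t z1 \<noteq> t z3" "t z2 \<noteq> t z3"
      using on_line[of z1] on_line[of z2] on_line[of z3] distinct by auto
    then have "W = 0"
      using on_line unit by (intro unit_circle_no_three_collinear[of "of_real K1" "t z1" W "t z2" "t z3"]) auto
    then show False
      using on_line[of z1] on_line[of z2] distinct by simp
  qed
  then have "z = of_real K1 \<or> W = 0" if "z \<in> {z1, z2, z3}" for z
    using vertex[OF that] by simp
  then show "z1 + z2 + z3 = of_real K1"
    using distinct unfolding W_def by auto
qed

lemma Re_mult_unit:
  fixes z :: complex
  assumes "cmod z = 1"
  shows "of_real (Re z) * z = (z\<^sup>2 + 1) / 2"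
proof -
  have "cnj z * z = 1"
    using assms by (simp add: mult.commute flip: complex_norm_square)
  moreover have "of_real (Re z) = (z + cnj z) / 2"
    by (simp add: complex_add_cnj)
  ultimately show ?thesis
    by (simp add: distrib_right power2_eq_square add_divide_distrib)
qed

lemma unit_triple_sum_Re_mult:
  fixes z1 z2 z3 :: complex and s :: real
  assumes unit: "cmod z1 = 1" "cmod z2 = 1" "cmod z3 = 1" and sum: "z1 + z2 + z3 = of_real s"
  shows "of_real (Re z1) * z1 + of_real (Re z2) * z2 + of_real (Re z3) * z3
    = of_real ((s\<^sup>2 + 3) / 2) - of_real s * (z1 * z2 * z3)"
proof -
  have inverse_cnj: "inverse z = cnj z" if "cmod z = 1" for z :: complex
    using that by (intro inverse_unique) (simp flip: complex_norm_square)
  have "inverse z1 + inverse z2 + inverse z3 = of_real s"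
    using unit by (simp add: inverse_cnj sum flip: complex_cnj_add)
  moreover have "z1 * z2 * z3 * (inverse z1 + inverse z2 + inverse z3) = z2 * z3 + z1 * z3 + z1 * z2"
    using unit by (auto simp: field_simps)
  ultimately have "z1 * z2 + z2 * z3 + z1 * z3 = of_real s * (z1 * z2 * z3)"
    by (simp add: ac_simps)
  moreover have "(z1 + z2 + z3)\<^sup>2 = z1\<^sup>2 + z2\<^sup>2 + z3\<^sup>2 + 2 * (z1 * z2 + z2 * z3 + z1 * z3)"
    by algebra
  ultimately have squares: "z1\<^sup>2 + z2\<^sup>2 + z3\<^sup>2 = (of_real s)\<^sup>2 - 2 * of_real s * (z1 * z2 * z3)"
    unfolding sum by (simp add: algebra_simps)
  have "of_real (Re z1) * z1 + of_real (Re z2) * z2 + of_real (Re z3) * z3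
      = (z1\<^sup>2 + z2\<^sup>2 + z3\<^sup>2 + 3) / 2"
    using unit by (simp add: Re_mult_unit add_divide_distrib)
  also have "\<dots> = of_real ((s\<^sup>2 + 3) / 2) - of_real s * (z1 * z2 * z3)"
    unfolding squares by (simp add: field_simps)
  finally show ?thesis .
qed

lemma dist_complex_coords:
  fixes f :: "real \<times> real" and w w' :: complex
  shows "dist (f + s *\<^sub>R (Re w, Im w)) (f + s *\<^sub>R (Re w', Im w')) = \<bar>s\<bar> * cmod (w - w')"
proof -
  have "f + s *\<^sub>R (Re w, Im w) - (f + s *\<^sub>R (Re w', Im w')) = s *\<^sub>R (Re (w - w'), Im (w - w'))"
    by (simp add: algebra_simps)
  then show ?thesis
    unfolding dist_norm by (simp only: norm_scaleR) (simp add: norm_Pair cmod_def)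
qed

section \<open>Joachimsthal's integral\<close>

lemma on_ellipse_iff:
  assumes "a \<noteq> 0" "b \<noteq> 0"
  shows "on_ellipse a b P \<longleftrightarrow> (fst P)\<^sup>2 * b\<^sup>2 + (snd P)\<^sup>2 * a\<^sup>2 = a\<^sup>2 * b\<^sup>2"
  using assms unfolding on_ellipse_def by (simp add: field_simps) linarith

definition joachimsthal :: "real \<Rightarrow> real \<Rightarrow> real \<times> real \<Rightarrow> real \<times> real \<Rightarrow> real" where
  "joachimsthal a b P Q = inner (Q - P) (ellipse_normal a b P) / norm (Q - P)"

lemma inner_sq_add_cross_sq:
  fixes v w :: "real \<times> real"
  shows "(inner v w)\<^sup>2 + (fst v * snd w - snd v * fst w)\<^sup>2 = (norm v)\<^sup>2 * (norm w)\<^sup>2"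
  unfolding power2_norm_eq_inner by (cases v, cases w) (simp add: power2_eq_square algebra_simps)

lemma joachimsthal_sq_eq_if_normal_bisects:
  assumes "normal_bisects a b A P B" "A \<noteq> P" "B \<noteq> P"
  shows "(joachimsthal a b P A)\<^sup>2 = (joachimsthal a b P B)\<^sup>2"
proof -
  define n where "n = ellipse_normal a b P"
  define e where "e X = (1 / norm (X - P)) *\<^sub>R (X - P)" for X
  have norm_e: "norm (e X) = 1" if "X \<noteq> P" for X
    using that unfolding e_def by simp
  have J: "joachimsthal a b P X = inner (e X) n" for X
    unfolding joachimsthal_def e_def n_def by (simp add: divide_inverse mult.commute)
  have "fst (e A) * snd n - snd (e A) * fst n = - (fst (e B) * snd n - snd (e B) * fst n)"
    using assms(1) unfolding normal_bisects_def Let_def e_def n_def by (simp add: algebra_simps)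
  then have "(fst (e A) * snd n - snd (e A) * fst n)\<^sup>2 = (fst (e B) * snd n - snd (e B) * fst n)\<^sup>2"
    by (metis power2_minus)
  then show ?thesis
    using inner_sq_add_cross_sq[of "e A" n] inner_sq_add_cross_sq[of "e B" n]
      norm_e[OF assms(2)] norm_e[OF assms(3)] unfolding J by simp
qed

lemma joachimsthal_commute:
  assumes "on_ellipse a b P" "on_ellipse a b Q"
  shows "joachimsthal a b Q P = joachimsthal a b P Q"
proof -
  have inner_normal: "inner X (ellipse_normal a b Y) = fst X * fst Y / a\<^sup>2 + snd X * snd Y / b\<^sup>2"
    for X Y :: "real \<times> real"
    by (cases X, cases Y) (simp add: ellipse_normal_def)
  have "inner P (ellipse_normal a b P) = 1" "inner Q (ellipse_normal a b Q) = 1"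
    using assms unfolding on_ellipse_def inner_normal by (simp_all add: power2_eq_square)
  moreover have "inner P (ellipse_normal a b Q) = inner Q (ellipse_normal a b P)"
    unfolding inner_normal by (simp add: mult.commute)
  ultimately have "inner (P - Q) (ellipse_normal a b Q) = inner (Q - P) (ellipse_normal a b P)"
    by (simp add: inner_diff_left)
  then show ?thesis
    unfolding joachimsthal_def by (simp add: norm_minus_commute)
qed

lemma three_periodic_joachimsthal:
  assumes "three_periodic a b P1 P2 P3"
  shows "(joachimsthal a b P1 P3)\<^sup>2 = (joachimsthal a b P1 P2)\<^sup>2"
    and "(joachimsthal a b P2 P3)\<^sup>2 = (joachimsthal a b P1 P2)\<^sup>2"
  using assms joachimsthal_sq_eq_if_normal_bisects[of a b P3 P1 P2]
    joachimsthal_sq_eq_if_normal_bisects[of a b P1 P2 P3] joachimsthal_commute[of a b P1 P2]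
  unfolding three_periodic_def by auto

lemma joachimsthal_sq_coords:
  assumes "a \<noteq> 0" "b \<noteq> 0" "on_ellipse a b (x, y)" "(x, y) \<noteq> (x', y')"
  defines "G \<equiv> b\<^sup>2 * x * x' + a\<^sup>2 * y * y' - a\<^sup>2 * b\<^sup>2" and "H \<equiv> (x' - x)\<^sup>2 + (y' - y)\<^sup>2"
  shows "a\<^sup>2 * b\<^sup>2 * (joachimsthal a b (x, y) (x', y'))\<^sup>2 * (a\<^sup>2 * b\<^sup>2 * H) = G\<^sup>2"
proof -
  have "(x' - x) * x * b\<^sup>2 + (y' - y) * y * a\<^sup>2 = G"
    using assms(3) unfolding on_ellipse_iff[OF assms(1,2)] G_def
    by (simp add: algebra_simps power2_eq_square)
  then have J: "joachimsthal a b (x, y) (x', y') = G / (a\<^sup>2 * b\<^sup>2) / sqrt H"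
    unfolding joachimsthal_def ellipse_normal_def H_def using assms(1,2)
    by (simp add: norm_Pair field_simps power2_eq_square)
  have "0 < H"
    using assms(4) unfolding H_def by (auto simp: sum_power2_gt_zero_iff)
  then show ?thesis
    unfolding J using assms(1,2) by (simp add: power_divide power_mult_distrib field_simps)
qed

section \<open>Polar coordinates about a focus\<close>

definition focal_radius :: "real \<Rightarrow> real \<Rightarrow> real \<times> real \<Rightarrow> real" where
  "focal_radius a c P = a + c * fst P / a"

(* For P on the ellipse, the unit direction from the focus (-c, 0) to P, as a complex number so that
   directions can be multiplied. *)
definition focal_dir :: "real \<Rightarrow> real \<Rightarrow> real \<times> real \<Rightarrow> complex" where
  "focal_dir a c P = Complex (fst P + c) (snd P) / of_real (focal_radius a c P)"

lemma Re_focal_dir: "Re (focal_dir a c P) = (fst P + c) / focal_radius a c P"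
  and Im_focal_dir: "Im (focal_dir a c P) = snd P / focal_radius a c P"
  unfolding focal_dir_def by simp_all

lemma quartic_nonneg:
  fixes a b :: real
  shows "0 \<le> a ^ 4 - a\<^sup>2 * b\<^sup>2 + b ^ 4"
proof -
  have "a ^ 4 - a\<^sup>2 * b\<^sup>2 + b ^ 4 = (a\<^sup>2 - b\<^sup>2)\<^sup>2 + a\<^sup>2 * b\<^sup>2"
    by algebra
  moreover have "0 \<le> (a\<^sup>2 - b\<^sup>2)\<^sup>2 + a\<^sup>2 * b\<^sup>2"
    by (intro add_nonneg_nonneg) simp_all
  ultimately show ?thesis
    by linarith
qed

locale ellipse_focus =
  fixes a b c :: real
  assumes b_pos: "0 < b" and b_less_a: "b < a" and c_def: "c = sqrt (a\<^sup>2 - b\<^sup>2)"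
begin

lemma a_pos: "0 < a"
  using b_pos b_less_a by simp

lemma c_sq: "c\<^sup>2 = a\<^sup>2 - b\<^sup>2"
  using b_pos b_less_a by (simp add: c_def power_mono)

lemma c_pos: "0 < c"
  using b_pos b_less_a by (simp add: c_def power_strict_mono)

lemma c_less_a: "c < a"
proof (rule power_less_imp_less_base)
  show "c\<^sup>2 < a\<^sup>2" using c_sq b_pos by simp
qed (use a_pos in simp)

lemma on_ellipse_eq:
  assumes "on_ellipse a b (x, y)"
  shows "x\<^sup>2 * b\<^sup>2 + y\<^sup>2 * a\<^sup>2 = a\<^sup>2 * b\<^sup>2"
  using assms a_pos b_pos by (simp add: on_ellipse_iff)

lemma focal_radius_pos:
  assumes "on_ellipse a b P"
  shows "0 < focal_radius a c P"
proof -
  obtain x y where P: "P = (x, y)" by fastforce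
  have "0 \<le> y\<^sup>2 * a\<^sup>2" by simp
  then have "x\<^sup>2 * b\<^sup>2 \<le> a\<^sup>2 * b\<^sup>2"
    using on_ellipse_eq[of x y] assms unfolding P by linarith
  then have "\<bar>x\<bar> \<le> a"
    using a_pos b_pos abs_le_square_iff[of x a] by simp
  then have "c * \<bar>x\<bar> < a * a"
    using c_pos c_less_a a_pos by (meson le_less_trans mult_left_mono mult_strict_right_mono less_imp_le)
  moreover have "c * (- \<bar>x\<bar>) \<le> c * x"
    using c_pos by (intro mult_left_mono) auto
  ultimately show ?thesis
    unfolding focal_radius_def P using a_pos by (simp add: field_simps)
qed

lemma focal_radius_eq: "focal_radius a c (x, y) = (a\<^sup>2 + c * x) / a"
  unfolding focal_radius_def using a_pos by (simp add: field_simps power2_eq_square)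

lemma norm_focal_offset:
  assumes "on_ellipse a b P"
  shows "norm (P - (-c, 0)) = focal_radius a c P"
proof -
  obtain x y where P: "P = (x, y)" by fastforce
  have "a\<^sup>2 * ((x + c)\<^sup>2 + y\<^sup>2) = (a\<^sup>2 + c * x)\<^sup>2"
    using on_ellipse_eq[OF assms[unfolded P]] c_sq by algebra
  then have "(x + c)\<^sup>2 + y\<^sup>2 = (focal_radius a c P)\<^sup>2"
    unfolding P focal_radius_eq using a_pos by (simp add: power_divide field_simps)
  then show ?thesis
    using focal_radius_pos[OF assms] unfolding P by (simp add: norm_Pair real_sqrt_unique)
qed

lemma focal_offset_eq:
  assumes "on_ellipse a b P"
  shows "P - (-c, 0) = focal_radius a c P *\<^sub>R (Re (focal_dir a c P), Im (focal_dir a c P))"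
  using focal_radius_pos[OF assms] by (cases P) (simp add: Re_focal_dir Im_focal_dir)

lemma norm_focal_dir:
  assumes "on_ellipse a b P"
  shows "cmod (focal_dir a c P) = 1"
proof -
  have "norm (P - (-c, 0)) = focal_radius a c P * cmod (focal_dir a c P)"
    unfolding focal_offset_eq[OF assms] using focal_radius_pos[OF assms]
    by (simp only: norm_scaleR) (simp add: norm_Pair cmod_def)
  then show ?thesis
    using norm_focal_offset[OF assms] focal_radius_pos[OF assms] by simp
qed

lemma focal_radius_polar:
  assumes "on_ellipse a b P"
  shows "focal_radius a c P * (a - c * Re (focal_dir a c P)) = b\<^sup>2"
proof -
  have "focal_radius a c P * (a - c * Re (focal_dir a c P)) = a * focal_radius a c P - c * (fst P + c)"
    using focal_radius_pos[OF assms] by (simp add: Re_focal_dir right_diff_distrib)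
  also have "\<dots> = b\<^sup>2"
    unfolding focal_radius_def using a_pos c_sq by (simp add: algebra_simps power2_eq_square)
  finally show ?thesis .
qed

lemma focal_dir_inj:
  assumes "on_ellipse a b P" "on_ellipse a b Q" "focal_dir a c P = focal_dir a c Q"
  shows "P = Q"
proof -
  have "focal_radius a c P * (a - c * Re (focal_dir a c P))
      = focal_radius a c Q * (a - c * Re (focal_dir a c P))"
    using focal_radius_polar[OF assms(1)] focal_radius_polar[OF assms(2)] assms(3) by simp
  moreover have "a - c * Re (focal_dir a c P) \<noteq> 0"
    using focal_radius_polar[OF assms(1)] b_pos by auto
  ultimately have "focal_radius a c P = focal_radius a c Q"
    by simp
  then have "P - (-c, 0) = Q - (-c, 0)"
    using focal_offset_eq[OF assms(1)] focal_offset_eq[OF assms(2)] assms(3) by simp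
  then show ?thesis
    by simp
qed

lemma invert_focus:
  assumes "on_ellipse a b P"
  shows "invert (-c, 0) \<rho> P = (-c, 0) +
    (\<rho>\<^sup>2 * (a - c * Re (focal_dir a c P)) / b\<^sup>2) *\<^sub>R (Re (focal_dir a c P), Im (focal_dir a c P))"
proof -
  let ?r = "focal_radius a c P"
  have "(a - c * Re (focal_dir a c P)) / b\<^sup>2 = 1 / ?r"
    using focal_radius_pos[OF assms] b_pos focal_radius_polar[OF assms] by (simp add: field_simps)
  moreover have "(\<rho> / ?r)\<^sup>2 * ?r = \<rho>\<^sup>2 * (1 / ?r)"
    using focal_radius_pos[OF assms] by (simp add: power2_eq_square)
  ultimately have "(\<rho> / ?r)\<^sup>2 * ?r = \<rho>\<^sup>2 * (a - c * Re (focal_dir a c P)) / b\<^sup>2"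
    by (metis times_divide_eq_right)
  moreover have "invert (-c, 0) \<rho> P = (-c, 0) +
      ((\<rho> / ?r)\<^sup>2 * ?r) *\<^sub>R (Re (focal_dir a c P), Im (focal_dir a c P))"
    unfolding invert_def norm_focal_offset[OF assms]
    by (subst focal_offset_eq[OF assms]) (simp only: scaleR_scaleR)
  ultimately show ?thesis
    by simp
qed

lemma centroid_invert_focus:
  assumes "on_ellipse a b P1" "on_ellipse a b P2" "on_ellipse a b P3"
  defines "W \<equiv> of_real (a - c * Re (focal_dir a c P1)) * focal_dir a c P1
    + of_real (a - c * Re (focal_dir a c P2)) * focal_dir a c P2
    + of_real (a - c * Re (focal_dir a c P3)) * focal_dir a c P3"
  shows "(1 / 3) *\<^sub>R (invert (-c, 0) \<rho> P1 + invert (-c, 0) \<rho> P2 + invert (-c, 0) \<rho> P3)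
    = (-c, 0) + (\<rho>\<^sup>2 / (3 * b\<^sup>2)) *\<^sub>R (Re W, Im W)"
  unfolding invert_focus[OF assms(1)] invert_focus[OF assms(2)] invert_focus[OF assms(3)] W_def
  using b_pos by (simp add: field_simps)

section \<open>The sides of a 3-periodic in focal coordinates\<close>

definition focal_chord_const :: "real \<Rightarrow> real" where
  "focal_chord_const \<mu> = (a\<^sup>2 * b\<^sup>2 + \<mu> * (b\<^sup>2 - 3 * a\<^sup>2)) / (a\<^sup>2 * b\<^sup>2 + \<mu> * c\<^sup>2)"

definition focal_chord_coeff :: "real \<Rightarrow> real" where
  "focal_chord_coeff \<mu> = 2 * \<mu> * a * c / (a\<^sup>2 * b\<^sup>2 + \<mu> * c\<^sup>2)"

lemma focal_dir_coords:
  assumes "on_ellipse a b (x, y)" "on_ellipse a b (x', y')"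
  defines "R \<equiv> a\<^sup>2 + c * x" and "R' \<equiv> a\<^sup>2 + c * x'"
  shows "inner (focal_dir a c (x, y)) (focal_dir a c (x', y')) = a\<^sup>2 * ((x + c) * (x' + c) + y * y') / (R * R')"
    and "Re (focal_dir a c (x, y) + focal_dir a c (x', y')) = a * ((x + c) * R' + (x' + c) * R) / (R * R')"
proof -
  have "0 < R" "0 < R'"
    using focal_radius_pos[OF assms(1)] focal_radius_pos[OF assms(2)] a_pos
    unfolding focal_radius_eq R_def R'_def by (simp_all add: zero_less_divide_iff)
  then show "inner (focal_dir a c (x, y)) (focal_dir a c (x', y')) = a\<^sup>2 * ((x + c) * (x' + c) + y * y') / (R * R')"
    and "Re (focal_dir a c (x, y) + focal_dir a c (x', y')) = a * ((x + c) * R' + (x' + c) * R) / (R * R')"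
    unfolding inner_complex_def plus_complex.sel Re_focal_dir Im_focal_dir focal_radius_eq
      R_def[symmetric] R'_def[symmetric] using a_pos by (simp_all add: field_simps power2_eq_square)
qed

lemma focal_chord_identity:
  fixes x y x' y' \<mu> :: real
  assumes "x\<^sup>2 * b\<^sup>2 + y\<^sup>2 * a\<^sup>2 = a\<^sup>2 * b\<^sup>2" "x'\<^sup>2 * b\<^sup>2 + y'\<^sup>2 * a\<^sup>2 = a\<^sup>2 * b\<^sup>2"
  defines "R \<equiv> a\<^sup>2 + c * x" and "R' \<equiv> a\<^sup>2 + c * x'"
    and "G \<equiv> b\<^sup>2 * x * x' + a\<^sup>2 * y * y' - a\<^sup>2 * b\<^sup>2" and "H \<equiv> (x' - x)\<^sup>2 + (y' - y)\<^sup>2"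
  assumes "\<mu> * (a\<^sup>2 * b\<^sup>2 * H) = G\<^sup>2" and "H \<noteq> 0"
  shows "(a\<^sup>2 * b\<^sup>2 + \<mu> * c\<^sup>2) * (a\<^sup>2 * ((x + c) * (x' + c) + y * y'))
    = (a\<^sup>2 * b\<^sup>2 + \<mu> * (b\<^sup>2 - 3 * a\<^sup>2)) * (R * R') + 2 * \<mu> * a * c * (a * ((x + c) * R' + (x' + c) * R))"
proof -
  define T where "T = (x + c) * (x' + c) + y * y'"
  define U where "U = (x + c) * R' + (x' + c) * R"
  define X where "X = b\<^sup>2 * c\<^sup>2 * x * x' - a\<^sup>2 * c\<^sup>2 * y * y' - a\<^sup>2 * b\<^sup>2 * (a\<^sup>2 + b\<^sup>2)"
  have "a\<^sup>2 * T = R * R' + G"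
    unfolding T_def R_def R'_def G_def using c_sq by algebra
  \<comment> \<open>On the ellipse the squared chord length is divisible by the polar form G.\<close>
  moreover have "a ^ 4 * b ^ 4 * H = G * X"
    unfolding H_def G_def X_def using assms(1,2) c_sq by algebra
  moreover have "(b\<^sup>2 - 3 * a\<^sup>2) * R * R' + 2 * a\<^sup>2 * c * U - c\<^sup>2 * a\<^sup>2 * T = X"
    unfolding X_def R_def R'_def U_def T_def using c_sq by algebra
  ultimately have "(a\<^sup>2 * b\<^sup>2 * H) * ((a\<^sup>2 * b\<^sup>2 + \<mu> * c\<^sup>2) * (a\<^sup>2 * T)
      - ((a\<^sup>2 * b\<^sup>2 + \<mu> * (b\<^sup>2 - 3 * a\<^sup>2)) * (R * R') + 2 * \<mu> * a * c * (a * U))) = 0"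
    using assms(7) by algebra
  then show ?thesis
    unfolding T_def U_def using a_pos b_pos \<open>H \<noteq> 0\<close> by (simp only: mult_eq_0_iff) simp
qed

lemma focal_dir_chord:
  assumes P: "on_ellipse a b P" and Q: "on_ellipse a b Q" and "P \<noteq> Q"
  defines "\<mu> \<equiv> a\<^sup>2 * b\<^sup>2 * (joachimsthal a b P Q)\<^sup>2"
  shows "inner (focal_dir a c P) (focal_dir a c Q)
    = focal_chord_const \<mu> + focal_chord_coeff \<mu> * Re (focal_dir a c P + focal_dir a c Q)"
proof -
  obtain x y x' y' where PQ: "P = (x, y)" "Q = (x', y')" by fastforce
  let ?D = "a\<^sup>2 * b\<^sup>2 + \<mu> * c\<^sup>2" and ?N0 = "a\<^sup>2 * b\<^sup>2 + \<mu> * (b\<^sup>2 - 3 * a\<^sup>2)"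
    and ?N1 = "2 * \<mu> * a * c" and ?RR = "(a\<^sup>2 + c * x) * (a\<^sup>2 + c * x')"
    and ?I = "inner (focal_dir a c P) (focal_dir a c Q)" and ?S = "Re (focal_dir a c P + focal_dir a c Q)"
  have "0 < ?RR"
    using focal_radius_pos[OF P] focal_radius_pos[OF Q] a_pos
    unfolding PQ focal_radius_eq by (simp add: zero_less_divide_iff)
  have "(x' - x)\<^sup>2 + (y' - y)\<^sup>2 \<noteq> 0"
    using \<open>P \<noteq> Q\<close> unfolding PQ by (auto simp: sum_power2_eq_zero_iff)
  then have "?D * (?I * ?RR) = ?N0 * ?RR + ?N1 * (?S * ?RR)"
    using focal_chord_identity[OF on_ellipse_eq[OF P[unfolded PQ]] on_ellipse_eq[OF Q[unfolded PQ]]]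
      joachimsthal_sq_coords[of a b x y x' y'] P Q \<open>0 < ?RR\<close> a_pos b_pos
    unfolding \<mu>_def PQ focal_dir_coords[OF P[unfolded PQ] Q[unfolded PQ]] by auto
  then have "(?D * ?I - (?N0 + ?N1 * ?S)) * ?RR = 0"
    by algebra
  moreover have "?RR \<noteq> 0"
    using \<open>0 < ?RR\<close> by linarith
  ultimately have "?D * ?I = ?N0 + ?N1 * ?S"
    by (simp only: mult_eq_0_iff) simp
  moreover have "0 < ?D"
    unfolding \<mu>_def using a_pos b_pos by (simp add: add_pos_nonneg)
  ultimately have "?I = (?N0 + ?N1 * ?S) / ?D"
    by (simp add: eq_divide_eq mult.commute)
  then show ?thesis
    unfolding focal_chord_const_def focal_chord_coeff_def by (simp add: add_divide_distrib)
qed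

lemma focal_chord_coeff_if_closed:
  assumes "0 \<le> \<mu>" and closing: "2 * focal_chord_const \<mu> + 1 + (focal_chord_coeff \<mu>)\<^sup>2 = 0"
    and \<delta>: "\<delta> = sqrt (a ^ 4 - a\<^sup>2 * b\<^sup>2 + b ^ 4)"
  shows "c * focal_chord_coeff \<mu> = (2 * a\<^sup>2 - b\<^sup>2 - \<delta>) / a"
proof -
  define D where "D = a\<^sup>2 * b\<^sup>2 + \<mu> * c\<^sup>2"
  define M where "M = 2 * a\<^sup>2 - b\<^sup>2 - \<delta>"
  have D_pos: "0 < D"
    unfolding D_def using a_pos b_pos \<open>0 \<le> \<mu>\<close> by (simp add: add_pos_nonneg)
  have \<delta>_sq: "\<delta>\<^sup>2 = a ^ 4 - a\<^sup>2 * b\<^sup>2 + b ^ 4" and "0 \<le> \<delta>"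
    using \<delta> quartic_nonneg[of a b] by simp_all
  have "(2 * focal_chord_const \<mu> + 1 + (focal_chord_coeff \<mu>)\<^sup>2) * D\<^sup>2
      = 2 * (a\<^sup>2 * b\<^sup>2 + \<mu> * (b\<^sup>2 - 3 * a\<^sup>2)) * D + D\<^sup>2 + (2 * \<mu> * a * c)\<^sup>2"
    unfolding focal_chord_const_def focal_chord_coeff_def D_def[symmetric] using D_pos
    by (simp add: field_simps power2_eq_square)
  then have quadratic: "\<mu>\<^sup>2 * c ^ 4 + 2 * \<mu> * a\<^sup>2 * b\<^sup>2 * (a\<^sup>2 + b\<^sup>2) - 3 * a ^ 4 * b ^ 4 = 0"
    unfolding closing D_def using c_sq by algebra
  \<comment> \<open>For 0 \<le> \<mu> the second factor is positive, so the first one picks out the root.\<close>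
  have "c\<^sup>2 * (b\<^sup>2 + \<delta>) * (\<mu>\<^sup>2 * c ^ 4 + 2 * \<mu> * a\<^sup>2 * b\<^sup>2 * (a\<^sup>2 + b\<^sup>2) - 3 * a ^ 4 * b ^ 4)
      = (\<mu> * c\<^sup>2 * (b\<^sup>2 + \<delta>) - a\<^sup>2 * b\<^sup>2 * M) * (c ^ 4 * \<mu> + a\<^sup>2 * b\<^sup>2 * (2 * \<delta> + a\<^sup>2 + b\<^sup>2))"
    unfolding M_def using \<delta>_sq c_sq by algebra
  moreover have "0 < c ^ 4 * \<mu> + a\<^sup>2 * b\<^sup>2 * (2 * \<delta> + a\<^sup>2 + b\<^sup>2)"
  proof -
    have "0 < 2 * \<delta> + a\<^sup>2 + b\<^sup>2"
      using \<open>0 \<le> \<delta>\<close> zero_le_power2[of b] zero_less_power2[of a] a_pos by linarith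
    then have "0 < a\<^sup>2 * b\<^sup>2 * (2 * \<delta> + a\<^sup>2 + b\<^sup>2)"
      using a_pos b_pos by simp
    moreover have "0 \<le> c ^ 4 * \<mu>"
      using \<open>0 \<le> \<mu>\<close> by simp
    ultimately show ?thesis
      by linarith
  qed
  ultimately have "\<mu> * c\<^sup>2 * (b\<^sup>2 + \<delta>) = a\<^sup>2 * b\<^sup>2 * M"
    unfolding quadratic by simp
  then have "a * (c * (2 * \<mu> * a * c)) = M * D"
    unfolding M_def D_def by algebra
  then show ?thesis
    unfolding focal_chord_coeff_def D_def[symmetric] M_def[symmetric] using D_pos a_pos
    by (simp add: field_simps)
qed

lemma delta_less:
  assumes \<delta>: "\<delta> = sqrt (a ^ 4 - a\<^sup>2 * b\<^sup>2 + b ^ 4)"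
  shows "\<delta> < 2 * a\<^sup>2 - b\<^sup>2"
proof (rule power_less_imp_less_base)
  have "\<delta>\<^sup>2 = a ^ 4 - a\<^sup>2 * b\<^sup>2 + b ^ 4"
    using \<delta> quartic_nonneg[of a b] by simp
  then have "(2 * a\<^sup>2 - b\<^sup>2)\<^sup>2 - \<delta>\<^sup>2 = 3 * a\<^sup>2 * c\<^sup>2"
    using c_sq by algebra
  moreover have "0 < 3 * a\<^sup>2 * c\<^sup>2"
    using a_pos c_pos by simp
  ultimately show "\<delta>\<^sup>2 < (2 * a\<^sup>2 - b\<^sup>2)\<^sup>2"
    by linarith
  have "b\<^sup>2 < a\<^sup>2"
    using b_less_a b_pos by (simp add: power_strict_mono)
  then show "0 \<le> 2 * a\<^sup>2 - b\<^sup>2"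
    using zero_le_power2[of a] by linarith
qed

lemma three_periodic_focal_dir_sum:
  assumes "three_periodic a b P1 P2 P3" and \<delta>: "\<delta> = sqrt (a ^ 4 - a\<^sup>2 * b\<^sup>2 + b ^ 4)"
  shows "focal_dir a c P1 + focal_dir a c P2 + focal_dir a c P3 = of_real ((2 * a\<^sup>2 - b\<^sup>2 - \<delta>) / (a * c))"
proof -
  define \<mu> where "\<mu> = a\<^sup>2 * b\<^sup>2 * (joachimsthal a b P1 P2)\<^sup>2"
  define K where "K = focal_chord_coeff \<mu>"
  define z where "z = focal_dir a c"
  have on: "on_ellipse a b P1" "on_ellipse a b P2" "on_ellipse a b P3"
    and neq: "P1 \<noteq> P2" "P1 \<noteq> P3" "P2 \<noteq> P3"
    using assms(1) unfolding three_periodic_def by auto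
  have chord: "inner (z P) (z Q) = focal_chord_const \<mu> + K * Re (z P + z Q)"
    if "on_ellipse a b P" "on_ellipse a b Q" "P \<noteq> Q"
      "(joachimsthal a b P Q)\<^sup>2 = (joachimsthal a b P1 P2)\<^sup>2" for P Q
    using focal_dir_chord[OF that(1-3)] that(4) unfolding \<mu>_def K_def z_def by simp
  have unit: "cmod (z P1) = 1" "cmod (z P2) = 1" "cmod (z P3) = 1"
    using norm_focal_dir on unfolding z_def by auto
  have "z P1 \<noteq> z P2" "z P1 \<noteq> z P3" "z P2 \<noteq> z P3"
    using focal_dir_inj on neq unfolding z_def by metis+
  then have closed: "2 * focal_chord_const \<mu> + 1 + K\<^sup>2 = 0"
    and sum: "z P1 + z P2 + z P3 = of_real K"
    using unit_triple_chord_relation[OF unit] chord on neq three_periodic_joachimsthal[OF assms(1)]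
    by auto
  have "c * K = (2 * a\<^sup>2 - b\<^sup>2 - \<delta>) / a"
    using focal_chord_coeff_if_closed[OF _ closed[unfolded K_def] \<delta>] unfolding \<mu>_def K_def by simp
  then have "K = (2 * a\<^sup>2 - b\<^sup>2 - \<delta>) / (a * c)"
    using a_pos c_pos by (simp add: field_simps)
  then show ?thesis
    using sum unfolding z_def by simp
qed

lemma focal_weighted_sum:
  fixes z1 z2 z3 :: complex
  assumes unit: "cmod z1 = 1" "cmod z2 = 1" "cmod z3 = 1"
    and \<delta>: "\<delta> = sqrt (a ^ 4 - a\<^sup>2 * b\<^sup>2 + b ^ 4)"
    and sum: "z1 + z2 + z3 = of_real ((2 * a\<^sup>2 - b\<^sup>2 - \<delta>) / (a * c))"
  defines "M \<equiv> 2 * a\<^sup>2 - b\<^sup>2 - \<delta>"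
  shows "of_real (a - c * Re z1) * z1 + of_real (a - c * Re z2) * z2 + of_real (a - c * Re z3) * z3
    = of_real (- c * M / a\<^sup>2) + of_real (M / a) * (z1 * z2 * z3)"
proof -
  define K where "K = M / (a * c)"
  have "\<delta>\<^sup>2 = a ^ 4 - a\<^sup>2 * b\<^sup>2 + b ^ 4"
    using \<delta> quartic_nonneg[of a b] by simp
  then have numerator: "2 * a\<^sup>2 * M - M\<^sup>2 - 3 * a\<^sup>2 * c\<^sup>2 + 2 * c\<^sup>2 * M = 0"
    unfolding M_def using c_sq by algebra
  have "a * K - c * (K\<^sup>2 + 3) / 2 + c * M / a\<^sup>2
      = (2 * a\<^sup>2 * M - M\<^sup>2 - 3 * a\<^sup>2 * c\<^sup>2 + 2 * c\<^sup>2 * M) / (2 * a\<^sup>2 * c)"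
    unfolding K_def using a_pos c_pos by (simp add: field_simps power2_eq_square)
  then have center: "a * K - c * (K\<^sup>2 + 3) / 2 = - c * M / a\<^sup>2"
    unfolding numerator by simp
  have "of_real (a - c * Re z1) * z1 + of_real (a - c * Re z2) * z2 + of_real (a - c * Re z3) * z3
      = of_real a * (z1 + z2 + z3)
        - of_real c * (of_real (Re z1) * z1 + of_real (Re z2) * z2 + of_real (Re z3) * z3)"
    by (simp add: algebra_simps)
  also have "\<dots> = of_real a * of_real K - of_real c * (of_real ((K\<^sup>2 + 3) / 2) - of_real K * (z1 * z2 * z3))"
    unfolding unit_triple_sum_Re_mult[OF unit sum[folded M_def K_def]] sum[folded M_def K_def] ..
  also have "\<dots> = of_real (a * K - c * (K\<^sup>2 + 3) / 2) + of_real (c * K) * (z1 * z2 * z3)"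
    by (simp add: field_simps)
  also have "c * K = M / a"
    unfolding K_def using c_pos by simp
  finally show ?thesis
    unfolding center .
qed

lemma three_periodic_weighted_sum_dist:
  assumes "three_periodic a b P1 P2 P3" and \<delta>: "\<delta> = sqrt (a ^ 4 - a\<^sup>2 * b\<^sup>2 + b ^ 4)"
  defines "z \<equiv> focal_dir a c" and "M \<equiv> 2 * a\<^sup>2 - b\<^sup>2 - \<delta>"
  shows "dist (of_real (a - c * Re (z P1)) * z P1 + of_real (a - c * Re (z P2)) * z P2
      + of_real (a - c * Re (z P3)) * z P3) (of_real (- c * M / a\<^sup>2)) = M / a"
proof -
  have unit: "cmod (z P1) = 1" "cmod (z P2) = 1" "cmod (z P3) = 1"
    using norm_focal_dir assms(1) unfolding three_periodic_def z_def by auto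
  have "of_real (a - c * Re (z P1)) * z P1 + of_real (a - c * Re (z P2)) * z P2
      + of_real (a - c * Re (z P3)) * z P3 = of_real (- c * M / a\<^sup>2) + of_real (M / a) * (z P1 * z P2 * z P3)"
    using focal_weighted_sum[OF unit[unfolded z_def] \<delta> three_periodic_focal_dir_sum[OF assms(1) \<delta>]]
    unfolding z_def M_def .
  moreover have "0 < M"
    using delta_less[OF \<delta>] unfolding M_def by simp
  ultimately show ?thesis
    using unit a_pos unfolding dist_norm by (simp add: norm_mult norm_divide)
qed

end

theorem mainTheorem11:
  fixes a b \<rho> c \<delta> :: real and P1 P2 P3 :: "real \<times> real"
  assumes "a > b" and "b > 0" and "\<rho> > 0"
    and "c = sqrt (a^2 - b^2)"
    and "\<delta> = sqrt (a^4 - a^2 * b^2 + b^4)"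
    and "three_periodic a b P1 P2 P3"
  shows "dist ((1/3) *\<^sub>R (invert (-c, 0) \<rho> P1 + invert (-c, 0) \<rho> P2 + invert (-c, 0) \<rho> P3))
              (- c * (1 + \<rho>^2 * (2 * a^2 - b^2 - \<delta>) / (3 * a^2 * b^2)), 0)
         = \<rho>^2 * (2 * a^2 - b^2 - \<delta>) / (3 * a * b^2)"
proof -
  interpret ellipse_focus a b c
    using assms(1,2,4) by unfold_locales
  define M where "M = 2 * a\<^sup>2 - b\<^sup>2 - \<delta>"
  have on: "on_ellipse a b P1" "on_ellipse a b P2" "on_ellipse a b P3"
    using assms(6) unfolding three_periodic_def by auto
  have center: "(- c * (1 + \<rho>\<^sup>2 * M / (3 * a\<^sup>2 * b\<^sup>2)), 0) = (-c, 0)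
      + (\<rho>\<^sup>2 / (3 * b\<^sup>2)) *\<^sub>R (Re (of_real (- c * M / a\<^sup>2)), Im (of_real (- c * M / a\<^sup>2)))"
    using a_pos b_pos by (simp add: field_simps)
  have "dist ((1 / 3) *\<^sub>R (invert (-c, 0) \<rho> P1 + invert (-c, 0) \<rho> P2 + invert (-c, 0) \<rho> P3))
      (- c * (1 + \<rho>\<^sup>2 * M / (3 * a\<^sup>2 * b\<^sup>2)), 0) = \<rho>\<^sup>2 / (3 * b\<^sup>2) * (M / a)"
    unfolding centroid_invert_focus[OF on] center dist_complex_coords
    using three_periodic_weighted_sum_dist[OF assms(6,5)] unfolding M_def dist_norm by simp
  then show ?thesis
    unfolding M_def by simp
qed

end
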